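(* Let $\mathcal{I}\in\mathrm{Ins}(\Omega,\mathcal{H},\mathcal{K})$ be an instrument. Then any two complementary instruments of $\mathcal{I}$, relative to any two dilations of $\mathcal{I}$, are postprocessing equivalent.
   Context: All Hilbert spaces are finite-dimensional and complex, and all outcome sets are finite. A POVM $\mathsf{E}\in\mathcal{O}(\Omega,\mathcal{H})$ is a map $x\mapsto \mathsf{E}(x)$ from $\Omega$ to positive operators with $\sum_x\mathsf{E}(x)=I$. An instrument $\mathcal{I}\in\mathrm{Ins}(\Omega,\mathcal{H},\mathcal{K})$ is a family $(\mathcal{I}_x)_{x\in\Omega}$ of completely positive trace-nonincreasing linear maps $\mathcal{L}(\mathcal{H})\to\mathcal{L}(\mathcal{K})$ whose sum is trace preserving. A dilation of $\mathcal{I}$ is a triple $(\mathcal{H}_A,W,\mathsf{E})$ with $\mathcal{H}_A$ a Hilbert space, $W:\mathcal{H}\to\mathcal{H}_A\otimes\mathcal{K}$ an isometry and $\mathsf{E}\in\mathcal{O}(\Omega,\mathcal{H}_A)$, such that $\mathcal{I}_x(\varrho)=\mathrm{tr}_{\mathcal{H}_A}[W\varrho W^*(\mathsf{E}(x)\otimes I_{\mathcal{K}})]$ for all $x$ and states $\varrho$. The complementary instrument relative to this dilation is $\mathcal{I}^C\in\mathrm{Ins}(\Omega,\mathcal{H},\mathcal{H}_A)$, $\mathcal{I}^C_x(\varrho)=\mathrm{tr}_{\mathcal{K}}[(\sqrt{\mathsf{E}(x)}\otimes I_{\mathcal{K}})W\varrho W^*(\sqrt{\mathsf{E}(x)}\otimes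 I_{\mathcal{K}})]$. For instruments $\mathcal{I}\in\mathrm{Ins}(\Omega,\mathcal{H},\mathcal{K})$ and $\mathcal{J}\in\mathrm{Ins}(\Lambda,\mathcal{H},\mathcal{V})$, $\mathcal{I}\preceq\mathcal{J}$ (postprocessing) if there exist instruments $\mathcal{R}^{(y)}\in\mathrm{Ins}(\Omega,\mathcal{V},\mathcal{K})$, $y\in\Lambda$, with $\mathcal{I}_x=\sum_y\mathcal{R}^{(y)}_x\circ\mathcal{J}_y$ for all $x$; they are postprocessing equivalent if $\mathcal{I}\preceq\mathcal{J}$ and $\mathcal{J}\preceq\mathcal{I}$. *)

theory Defs
  imports "HOL-Analysis.Analysis" "HOL-Library.Complex_Order"
begin

text \<open>Finite-dimensional complex Hilbert spaces are modelled as C^'n for a finite type 'n;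
  operators from C^'n to C^'m are matrices of type complex^'n^'m. The tensor product of
  C^'a and C^'k is C^('a \<times> 'k).\<close>

definition adj :: "complex^'n^'m \<Rightarrow> complex^'m^'n" where
  "adj A = (\<chi> i j. cnj (A $ j $ i))"

definition cscale :: "complex \<Rightarrow> complex^'n^'m \<Rightarrow> complex^'n^'m" where
  "cscale c A = (\<chi> i j. c * A $ i $ j)"

definition psd :: "complex^'n^'n \<Rightarrow> bool" where
  "psd A \<longleftrightarrow> (\<forall>v :: complex^'n. 0 \<le> (\<Sum>i\<in>UNIV. cnj (v $ i) * (A *v v) $ i))"

definition density :: "complex^'n^'n \<Rightarrow> bool" where
  "density \<rho> \<longleftrightarrow> psd \<rho> \<and> trace \<rho> = 1"

definition isometry :: "complex^'n^'m \<Rightarrow> bool" where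
  "isometry W \<longleftrightarrow> adj W ** W = mat 1"

definition psd_sqrt :: "complex^'n^'n \<Rightarrow> complex^'n^'n" where
  "psd_sqrt A = (THE B. psd B \<and> B ** B = A)"

definition kron :: "complex^'b^'a \<Rightarrow> complex^'d^'c \<Rightarrow> complex^('b \<times> 'd)^('a \<times> 'c)" where
  "kron A B = (\<chi> p q. A $ fst p $ fst q * B $ snd p $ snd q)"

definition ptrace1 :: "complex^('a::finite \<times> 'k::finite)^('a \<times> 'k) \<Rightarrow> complex^'k^'k" where
  "ptrace1 M = (\<chi> k l. \<Sum>a\<in>UNIV. M $ (a, k) $ (a, l))"

definition ptrace2 :: "complex^('a::finite \<times> 'k::finite)^('a \<times> 'k) \<Rightarrow> complex^'a^'a" where
  "ptrace2 M = (\<chi> a b. \<Sum>k\<in>UNIV. M $ (a, k) $ (b, k))"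

definition clinear_map :: "(complex^'n^'n \<Rightarrow> complex^'m^'m) \<Rightarrow> bool" where
  "clinear_map \<Phi> \<longleftrightarrow> (\<forall>A B. \<Phi> (A + B) = \<Phi> A + \<Phi> B) \<and> (\<forall>c A. \<Phi> (cscale c A) = cscale c (\<Phi> A))"

text \<open>Complete positivity: for every k, the ampliation id_k \<otimes> \<Phi> maps positive operators on
  C^k \<otimes> H (written as k\<times>k block matrices (X i j), i,j<k, with blocks in L(H)) to positive
  operators on C^k \<otimes> K.\<close>
definition block_psd :: "nat \<Rightarrow> (nat \<Rightarrow> nat \<Rightarrow> complex^'n^'n) \<Rightarrow> bool" where
  "block_psd k X \<longleftrightarrow> (\<forall>v :: nat \<Rightarrow> complex^'n.
     0 \<le> (\<Sum>i<k. \<Sum>j<k. \<Sum>r\<in>UNIV. cnj (v i $ r) * (X i j *v v j) $ r))"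

definition completely_positive :: "(complex^'n^'n \<Rightarrow> complex^'m^'m) \<Rightarrow> bool" where
  "completely_positive \<Phi> \<longleftrightarrow>
     (\<forall>k X. block_psd k X \<longrightarrow> block_psd k (\<lambda>i j. \<Phi> (X i j)))"

definition povm :: "('x::finite \<Rightarrow> complex^'a^'a) \<Rightarrow> bool" where
  "povm E \<longleftrightarrow> (\<forall>x. psd (E x)) \<and> (\<Sum>x\<in>UNIV. E x) = mat 1"

definition instrument :: "('x::finite \<Rightarrow> complex^'h^'h \<Rightarrow> complex^'k^'k) \<Rightarrow> bool" where
  "instrument I \<longleftrightarrow>
     (\<forall>x. clinear_map (I x) \<and> completely_positive (I x)
          \<and> (\<forall>\<rho>. psd \<rho> \<longrightarrow> trace (I x \<rho>) \<le> trace \<rho>))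
     \<and> (\<forall>\<rho>. trace (\<Sum>x\<in>UNIV. I x \<rho>) = trace \<rho>)"

definition dilation ::
  "('x::finite \<Rightarrow> complex^'h^'h \<Rightarrow> complex^'k^'k) \<Rightarrow> complex^'h^('a \<times> 'k) \<Rightarrow> ('x \<Rightarrow> complex^'a^'a) \<Rightarrow> bool" where
  "dilation I W E \<longleftrightarrow> isometry W \<and> povm E \<and>
     (\<forall>x \<rho>. density \<rho> \<longrightarrow> I x \<rho> = ptrace1 (W ** \<rho> ** adj W ** kron (E x) (mat 1)))"

definition complementary ::
  "complex^'h^('a::finite \<times> 'k::finite) \<Rightarrow> ('x \<Rightarrow> complex^'a^'a) \<Rightarrow> 'x \<Rightarrow> complex^'h^'h \<Rightarrow> complex^'a^'a" where
  "complementary W E x \<rho> =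
     ptrace2 (kron (psd_sqrt (E x)) (mat 1 :: complex^'k^'k) ** W ** \<rho> ** adj W
              ** kron (psd_sqrt (E x)) (mat 1 :: complex^'k^'k))"

definition postproc ::
  "('x::finite \<Rightarrow> complex^'h^'h \<Rightarrow> complex^'k^'k) \<Rightarrow> ('y::finite \<Rightarrow> complex^'h^'h \<Rightarrow> complex^'v^'v) \<Rightarrow> bool" where
  "postproc I J \<longleftrightarrow> (\<exists>R :: 'y \<Rightarrow> 'x \<Rightarrow> complex^'v^'v \<Rightarrow> complex^'k^'k.
     (\<forall>y. instrument (R y)) \<and> (\<forall>x. I x = (\<lambda>\<rho>. \<Sum>y\<in>UNIV. R y x (J y \<rho>))))"

definition postproc_equiv ::
  "('x::finite \<Rightarrow> complex^'h^'h \<Rightarrow> complex^'k^'k) \<Rightarrow> ('y::finite \<Rightarrow> complex^'h^'h \<Rightarrow> complex^'v^'v) \<Rightarrow> bool" where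
  "postproc_equiv I J \<longleftrightarrow> postproc I J \<and> postproc J I"

end

theory Submission
  imports Defs
begin

text \<open>Put \<open>V\<^sub>x = (\<surd>E(x) \<otimes> I) W\<close>. Then \<open>\<I>\<^sub>x(\<rho>)\<close> and the complementary instrument
  \<open>\<I>\<^sup>C\<^sub>x(\<rho>)\<close> are the partial traces of \<open>V\<^sub>x \<rho> V\<^sub>x\<^sup>*\<close> over \<open>H\<^sub>A\<close> and over \<open>K\<close>; the latter is
  \<open>M\<^sub>x (I \<otimes> \<rho>) M\<^sub>x\<^sup>*\<close>, where \<open>M\<^sub>x : K \<otimes> H \<rightarrow> H\<^sub>A\<close> is \<open>V\<^sub>x\<close> with its \<open>K\<close>-output moved to the
  input. The \<open>K\<close>-blocks of the Gram matrix \<open>M\<^sub>x\<^sup>* M\<^sub>x\<close> are the operators whose quadratic forms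
  are the entries of \<open>\<I>\<^sub>x(|u\<rangle>\<langle>u|)\<close>, so two dilations give factors \<open>M\<^sub>x\<close>, \<open>N\<^sub>x\<close> with the same
  Gram matrix. Hence \<open>M\<^sub>x = U\<^sub>x N\<^sub>x\<close> and \<open>N\<^sub>x = U\<^sub>x\<^sup>* M\<^sub>x\<close> for a partial isometry \<open>U\<^sub>x\<close>, and the
  channel \<open>\<sigma> \<mapsto> U\<^sub>x \<sigma> U\<^sub>x\<^sup>* + tr((I - U\<^sub>x\<^sup>* U\<^sub>x) \<sigma>) |e\<rangle>\<langle>e|\<close> turns the second complementary
  instrument into the first, outcome by outcome; the converse follows by symmetry. Positive square
  roots and the partial isometry both come from the spectral theorem for Hermitian matrices, proved
  by maximising the Rayleigh quotient.\<close>

section \<open>Inner product and adjoint\<close>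

definition cinner :: "complex^'n \<Rightarrow> complex^'n \<Rightarrow> complex" where
  "cinner u w = (\<Sum>i\<in>UNIV. cnj (u$i) * w$i)"

definition outer :: "complex^'m \<Rightarrow> complex^'n \<Rightarrow> complex^'n^'m" where
  "outer x y = (\<chi> i j. x$i * cnj (y$j))"

lemma cinner_add_right: "cinner u (v + w) = cinner u v + cinner u w"
  by (simp add: cinner_def algebra_simps sum.distrib)

lemma cinner_add_left: "cinner (u + v) w = cinner u w + cinner v w"
  by (simp add: cinner_def algebra_simps sum.distrib)

lemma cinner_diff_right: "cinner u (v - w) = cinner u v - cinner u w"
  by (simp add: cinner_def algebra_simps sum_subtractf)

lemma cinner_scale_right: "cinner u (c *s w) = c * cinner u w"
  by (simp add: cinner_def sum_distrib_left algebra_simps)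

lemma cinner_scale_left: "cinner (c *s u) w = cnj c * cinner u w"
  by (simp add: cinner_def sum_distrib_left algebra_simps)

lemma cinner_zero_right [simp]: "cinner u 0 = 0"
  by (simp add: cinner_def)

lemma cinner_zero_left [simp]: "cinner 0 u = 0"
  by (simp add: cinner_def)

lemma cinner_sum_right: "cinner u (\<Sum>b\<in>B. f b) = (\<Sum>b\<in>B. cinner u (f b))"
  by (induct B rule: infinite_finite_induct) (auto simp: cinner_add_right)

lemma cnj_cinner: "cnj (cinner u w) = cinner w u"
  by (simp add: cinner_def mult.commute)

lemma cinner_adj_left: "cinner (adj A *v u) w = cinner u (A *v w)"
proof -
  have "cinner (adj A *v u) w = (\<Sum>i\<in>UNIV. \<Sum>j\<in>UNIV. cnj (u$j) * A$j$i * w$i)"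
    by (simp add: cinner_def adj_def matrix_vector_mult_def sum_distrib_right sum_distrib_left mult_ac)
  also have "\<dots> = (\<Sum>j\<in>UNIV. \<Sum>i\<in>UNIV. cnj (u$j) * A$j$i * w$i)"
    by (rule sum.swap)
  also have "\<dots> = cinner u (A *v w)"
    by (simp add: cinner_def matrix_vector_mult_def sum_distrib_left mult_ac)
  finally show ?thesis .
qed

lemma cinner_adj_right: "cinner u (adj A *v w) = cinner (A *v u) w"
  by (metis cnj_cinner cinner_adj_left)

lemma cinner_self_eq_norm: "cinner v v = of_real ((norm v)^2)"
proof -
  have "cinner v v = of_real (\<Sum>i\<in>UNIV. (cmod (v$i))^2)"
    unfolding cinner_def of_real_sum
    by (rule sum.cong[OF refl]) (metis complex_norm_square mult.commute)
  then show ?thesis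
    by (simp add: norm_vec_def L2_set_def sum_nonneg)
qed

lemma cinner_self_eq_0_iff [simp]: "cinner v v = 0 \<longleftrightarrow> v = 0"
  by (simp add: cinner_self_eq_norm)

lemma vec_eq_if_cinner_eq: "(\<And>u. cinner u v = cinner u w) \<Longrightarrow> v = w"
  by (metis cinner_diff_right cinner_self_eq_0_iff diff_self eq_iff_diff_eq_0)

lemma adj_adj [simp]: "adj (adj A) = A"
  by (simp add: adj_def vec_eq_iff)

lemma adj_mult: "adj (A ** B) = adj B ** adj A"
  by (simp add: adj_def vec_eq_iff matrix_matrix_mult_def mult.commute)

lemma adj_diff: "adj (A - B) = adj A - adj B"
  by (simp add: adj_def vec_eq_iff)

lemma adj_mat_1 [simp]: "adj (mat 1) = mat 1"
  by (simp add: adj_def vec_eq_iff mat_def)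

lemma adj_sum: "adj (\<Sum>b\<in>B. f b) = (\<Sum>b\<in>B. adj (f b))"
  by (induct B rule: infinite_finite_induct) (auto simp: adj_def vec_eq_iff)

lemma outer_mult_vec: "outer x y *v z = cinner y z *s x"
  by (simp add: outer_def cinner_def vec_eq_iff matrix_vector_mult_def sum_distrib_left mult_ac)

lemma sum_mult_vec: "(\<Sum>b\<in>B. f b) *v z = (\<Sum>b\<in>B. f b *v z)"
  by (induct B rule: infinite_finite_induct) (auto simp: matrix_vector_mult_add_rdistrib)

lemma mult_vec_sum: "(A::complex^'n^'m) *v (\<Sum>b\<in>B. f b) = (\<Sum>b\<in>B. A *v f b)"
  by (induct B rule: infinite_finite_induct) (auto simp: matrix_vector_right_distrib)

lemma mult_vec_scale: "A *v (c *s v) = c *s (A *v (v::complex^'n))"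
  by (simp add: vec_eq_iff matrix_vector_mult_def sum_distrib_left mult_ac)

lemma matrix_add_rdistrib: "((A::complex^'n^'m) + B) ** C = A ** C + B ** C"
  by (simp add: vec_eq_iff matrix_matrix_mult_def sum.distrib algebra_simps)

lemma matrix_diff_rdistrib: "((A::complex^'n^'m) - B) ** C = A ** C - B ** C"
  by (simp add: vec_eq_iff matrix_matrix_mult_def sum_subtractf algebra_simps)

lemma matrix_diff_ldistrib: "(C::complex^'n^'m) ** (A - B) = C ** A - C ** B"
  by (simp add: vec_eq_iff matrix_matrix_mult_def sum_subtractf algebra_simps)

lemma mult_vec_axis: "(X *v axis i 1) $ j = X $ j $ (i::'n::finite)"
proof -
  have "(X *v axis i 1) $ j = (\<Sum>k\<in>UNIV. if k = i then X $ j $ k else 0)"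
    unfolding matrix_vector_mult_def axis_def vec_lambda_beta by (rule sum.cong) auto
  then show ?thesis by simp
qed

lemma cinner_axis: "cinner (axis i 1) w = w $ i"
proof -
  have "cinner (axis i 1) w = (\<Sum>j\<in>UNIV. if j = i then w $ j else 0)"
    unfolding cinner_def axis_def by (rule sum.cong) auto
  then show ?thesis by simp
qed

lemma trace_cinner: "trace (X::complex^'n^'n) = (\<Sum>i\<in>UNIV. cinner (axis i 1) (X *v axis i 1))"
  by (simp add: trace_def cinner_axis mult_vec_axis)

lemma matrix_eq_if_columns_eq: "(\<And>i. (X::complex^'n^'m) *v axis i 1 = Y *v axis i 1) \<Longrightarrow> X = Y"
  by (metis mult_vec_axis vec_eq_iff)

section \<open>Positive matrices\<close>

lemma psd_iff_cinner: "psd A \<longleftrightarrow> (\<forall>v. 0 \<le> cinner v (A *v v))"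
  by (simp add: psd_def cinner_def)

lemma complex_nonneg_iff: "(0::complex) \<le> z \<longleftrightarrow> 0 \<le> Re z \<and> Im z = 0"
  by (auto simp: less_eq_complex_def)

lemma adj_eq_self_if_form_real:
  fixes A :: "complex^'n^'n"
  assumes real: "\<And>v. Im (cinner v (A *v v)) = 0"
  shows "adj A = A"
proof -
  have "cinner (A *v u) w = cinner u (A *v w)" for u w
  proof -
    define a where "a = cinner u (A *v w)"
    define b where "b = cinner w (A *v u)"
    have "cinner (u + w) (A *v (u + w)) = cinner u (A *v u) + a + b + cinner w (A *v w)"
      by (simp add: a_def b_def matrix_vector_right_distrib cinner_add_left cinner_add_right)
    then have "Im (a + b) = 0"
      using real[of "u + w"] real[of u] real[of w] by simp
    moreover have "cinner (u + \<i> *s w) (A *v (u + \<i> *s w))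
        = cinner u (A *v u) + \<i> * a - \<i> * b + cinner w (A *v w)"
      by (simp add: a_def b_def matrix_vector_right_distrib mult_vec_scale cinner_add_left
          cinner_add_right cinner_scale_left cinner_scale_right algebra_simps)
    then have "Re (a - b) = 0"
      using real[of "u + \<i> *s w"] real[of u] real[of w] by simp
    ultimately have "b = cnj a" by (simp add: complex_eq_iff)
    then show ?thesis by (metis a_def b_def cnj_cinner complex_cnj_cnj)
  qed
  then show ?thesis
    unfolding matrix_eq by (intro allI vec_eq_if_cinner_eq) (simp add: cinner_adj_right)
qed

lemma psd_adj_eq: "psd A \<Longrightarrow> adj A = A"
  by (rule adj_eq_self_if_form_real) (simp add: psd_iff_cinner complex_nonneg_iff)

lemma hermitian_cinner_swap: "adj A = A \<Longrightarrow> cinner v (A *v w) = cinner (A *v v) w"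
  by (metis cinner_adj_right)

lemma linear_le_quadratic_imp_zero:
  fixes a C :: real
  assumes "\<And>t. 2 * t * a \<le> t^2 * C"
  shows "a = 0"
proof (rule ccontr)
  assume "a \<noteq> 0"
  define k where "k = \<bar>C\<bar> + 1"
  have "0 < k" "C < k"
    unfolding k_def using abs_ge_zero[of C] abs_ge_self[of C] by linarith+
  define t where "t = a / k"
  have "0 < t * a"
    using \<open>a \<noteq> 0\<close> \<open>0 < k\<close> by (simp add: t_def) (metis divide_pos_pos not_real_square_gt_zero)
  have "2 * t * a \<le> t^2 * C" by (rule assms)
  also have "t^2 * C = (t * a) * (C / k)"
    by (simp add: t_def power2_eq_square)
  finally have "(t * a) * 2 \<le> (t * a) * (C / k)"
    by (simp only: mult_ac)
  then have "2 \<le> C / k"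
    by (rule iffD1[OF mult_le_cancel_left_pos[OF \<open>0 < t * a\<close>]])
  moreover have "C / k < 1"
    using \<open>0 < k\<close> \<open>C < k\<close> by (simp add: divide_less_eq)
  ultimately show False by simp
qed

lemma psd_form_zero_imp_zero:
  assumes B: "psd B" and d: "cinner d (B *v d) = 0"
  shows "B *v d = 0"
proof -
  define u where "u = B *v d"
  have "- Re (cinner u u) = 0"
  proof (rule linear_le_quadratic_imp_zero[where C = "Re (cinner u (B *v u))"])
    fix t :: real
    have "cinner d (B *v u) = cinner u u"
      by (metis psd_adj_eq[OF B] cinner_adj_left u_def)
    moreover have "0 \<le> cinner (d + of_real t *s u) (B *v (d + of_real t *s u))"
      using B psd_iff_cinner by blast
    moreover have "cinner (d + of_real t *s u) (B *v (d + of_real t *s u))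
        = cinner d (B *v d) + of_real t * cinner d (B *v u) + of_real t * cinner u (B *v d)
          + of_real t * of_real t * cinner u (B *v u)"
      by (simp add: matrix_vector_right_distrib mult_vec_scale cinner_add_left cinner_add_right
          cinner_scale_left cinner_scale_right algebra_simps)
    ultimately show "2 * t * - Re (cinner u u) \<le> t^2 * Re (cinner u (B *v u))"
      using d by (simp add: u_def complex_nonneg_iff power2_eq_square)
  qed
  then show ?thesis by (simp add: cinner_self_eq_norm u_def)
qed

lemma psd_congruence: "psd X \<Longrightarrow> psd (adj D ** X ** D)"
  by (simp add: psd_iff_cinner cinner_adj_right flip: matrix_vector_mul_assoc)

lemma trace_psd_nonneg: "psd A \<Longrightarrow> 0 \<le> trace A"
  unfolding trace_cinner psd_iff_cinner by (rule sum_nonneg) blast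

lemma psd_trace_congruence_zero:
  assumes X: "psd X" and tr: "trace (adj D ** X ** D) = 0"
  shows "X ** D = 0"
proof (rule matrix_eq_if_columns_eq)
  fix i
  let ?f = "\<lambda>i. cinner (D *v axis i 1) (X *v (D *v axis i 1))"
  have "trace (adj D ** X ** D) = (\<Sum>i\<in>UNIV. ?f i)"
    by (simp add: trace_cinner cinner_adj_right flip: matrix_vector_mul_assoc)
  moreover have "0 \<le> ?f i" for i
    using X psd_iff_cinner by blast
  ultimately have "?f i = 0"
    using tr by (simp add: sum_nonneg_eq_0_iff)
  then show "(X ** D) *v axis i 1 = 0 *v axis i 1"
    using psd_form_zero_imp_zero[OF X] by (simp flip: matrix_vector_mul_assoc)
qed

lemma adj_mult_self_eq_0_imp_zero: "adj D ** D = 0 \<Longrightarrow> D = 0"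
  using psd_trace_congruence_zero[of "mat 1" D]
  by (simp add: psd_iff_cinner cinner_self_eq_norm complex_nonneg_iff trace_0[simplified])

lemma psd_square_root_unique:
  assumes B: "psd B" and C: "psd C" and eq: "B ** B = C ** C"
  shows "B = C"
proof -
  define D where "D = B - C"
  have adjD: "adj D = D"
    by (simp add: D_def adj_diff psd_adj_eq[OF B] psd_adj_eq[OF C])
  have "B ** D + D ** C = B ** B - C ** C"
    by (simp add: D_def matrix_add_ldistrib matrix_diff_ldistrib matrix_diff_rdistrib)
  then have "B ** D + D ** C = 0"
    by (simp add: eq)
  moreover have "D ** B ** D + D ** D ** C = D ** (B ** D + D ** C)"
    by (simp add: matrix_add_ldistrib matrix_mul_assoc)
  ultimately have "D ** B ** D + D ** D ** C = 0"
    by simp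
  then have "trace (D ** B ** D) + trace (D ** C ** D) = 0"
    by (metis trace_add trace_0 mat_0 matrix_mul_assoc trace_mul_sym)
  then have "trace (adj D ** B ** D) = 0" "trace (adj D ** C ** D) = 0"
    using trace_psd_nonneg[OF psd_congruence[OF B, of D]] trace_psd_nonneg[OF psd_congruence[OF C, of D]]
    by (simp_all add: adjD add_nonneg_eq_0_iff)
  then have "B ** D = 0" "C ** D = 0"
    using psd_trace_congruence_zero B C by blast+
  moreover have "adj D ** D = B ** D - C ** D"
    by (metis adjD D_def matrix_diff_rdistrib)
  ultimately have "adj D ** D = 0"
    by simp
  then show ?thesis
    using adj_mult_self_eq_0_imp_zero D_def by fastforce
qed

section \<open>Spectral theorem for Hermitian matrices\<close>

definition csubspace :: "(complex^'n) set \<Rightarrow> bool" where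
  "csubspace S \<longleftrightarrow> subspace S \<and> (\<forall>c v. v \<in> S \<longrightarrow> c *s v \<in> S)"

definition eigenbasis :: "complex^'n^'n \<Rightarrow> (complex^'n) set \<Rightarrow> (complex^'n) set \<Rightarrow> bool" where
  "eigenbasis A S B \<longleftrightarrow> finite B \<and> B \<subseteq> S \<and> (\<forall>b\<in>B. cinner b b = 1)
     \<and> (\<forall>b\<in>B. \<forall>b'\<in>B. b \<noteq> b' \<longrightarrow> cinner b b' = 0)
     \<and> (\<forall>b\<in>B. \<exists>c. A *v b = c *s b)
     \<and> (\<forall>v\<in>S. v = (\<Sum>b\<in>B. cinner b v *s b))"

lemma scaleR_eq_of_real_scale: "r *\<^sub>R (x::complex^'n) = of_real r *s x"
  unfolding vec_eq_iff
  by (simp only: vector_scaleR_component vector_smult_component) (simp add: scaleR_conv_of_real)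

lemma quadratic_form_scale:
  "Re (cinner (of_real c *s u) (A *v (of_real c *s u))) = c^2 * Re (cinner u (A *v u))"
  by (simp add: mult_vec_scale cinner_scale_left cinner_scale_right power2_eq_square)

lemma rayleigh_quotient_attains_max:
  fixes A :: "complex^'n^'n"
  assumes S: "subspace S" and u: "u \<in> S" "u \<noteq> 0"
  obtains v where "v \<in> S" "cinner v v = 1"
    "\<And>w. w \<in> S \<Longrightarrow> Re (cinner w (A *v w)) \<le> Re (cinner v (A *v v)) * Re (cinner w w)"
proof -
  let ?K = "sphere 0 1 \<inter> S"
  let ?f = "\<lambda>w::complex^'n. Re (cinner w (A *v w))"
  have "compact ?K"
    by (rule compact_Int_closed) (simp_all add: closed_subspace S)
  moreover have "(1 / norm u) *\<^sub>R u \<in> ?K"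
    using S u by (simp add: subspace_scale)
  moreover have "continuous_on ?K ?f"
    unfolding cinner_def matrix_vector_mult_def by (intro continuous_intros)
  ultimately obtain v where vK: "v \<in> ?K" and vmax: "\<And>w. w \<in> ?K \<Longrightarrow> ?f w \<le> ?f v"
    using continuous_attains_sup[of ?K ?f] by blast
  have "?f w \<le> ?f v * Re (cinner w w)" if "w \<in> S" for w
  proof (cases "w = 0")
    case False
    define n where "n = norm w"
    have "0 < n" using False by (simp add: n_def)
    then have "(1 / n) *\<^sub>R w \<in> ?K"
      using S that by (simp add: subspace_scale n_def)
    then have "of_real (1 / n) *s w \<in> ?K"
      by (simp only: scaleR_eq_of_real_scale)
    then have "?f (of_real (1 / n) *s w) \<le> ?f v"
      by (rule vmax)
    then have "(1 / n)^2 * ?f w \<le> ?f v"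
      by (simp only: quadratic_form_scale)
    then show ?thesis
      using \<open>0 < n\<close> by (simp add: cinner_self_eq_norm n_def field_simps)
  qed (simp)
  moreover have "cinner v v = 1"
    using vK by (simp add: cinner_self_eq_norm)
  ultimately show thesis
    using that vK by blast
qed

lemma rayleigh_max_orthogonal:
  fixes A :: "complex^'n^'n"
  assumes herm: "adj A = A" and S: "csubspace S" and v: "v \<in> S" "cinner v v = 1"
    and max: "\<And>w. w \<in> S \<Longrightarrow> Re (cinner w (A *v w)) \<le> Re (cinner v (A *v v)) * Re (cinner w w)"
    and w: "w \<in> S" "cinner v w = 0"
  shows "cinner w (A *v v) = 0"
proof -
  let ?lam = "Re (cinner v (A *v v))"
  have re0: "Re (cinner w (A *v v)) = 0" if wS: "w \<in> S" and ow: "cinner v w = 0" for w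
  proof (rule linear_le_quadratic_imp_zero[where C = "?lam * Re (cinner w w) - Re (cinner w (A *v w))"])
    fix t :: real
    let ?u = "v + of_real t *s w"
    have "cinner w v = 0"
      using ow by (metis cnj_cinner complex_cnj_zero)
    then have "cinner ?u ?u = 1 + of_real t * of_real t * cinner w w"
      using v ow by (simp add: cinner_add_left cinner_add_right cinner_scale_left cinner_scale_right)
    moreover have "cinner v (A *v w) = cnj (cinner w (A *v v))"
      by (metis cnj_cinner herm hermitian_cinner_swap)
    then have "cinner ?u (A *v ?u) = cinner v (A *v v) + of_real t * cnj (cinner w (A *v v))
        + of_real t * cinner w (A *v v) + of_real t * of_real t * cinner w (A *v w)"
      by (simp add: matrix_vector_right_distrib mult_vec_scale cinner_add_left cinner_add_right
          cinner_scale_left cinner_scale_right algebra_simps)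
    moreover have "?u \<in> S"
      using S v wS by (simp add: csubspace_def subspace_add)
    ultimately have "?lam + 2 * t * Re (cinner w (A *v v)) + t^2 * Re (cinner w (A *v w))
        \<le> ?lam * (1 + t^2 * Re (cinner w w))"
      using max[of ?u] by (simp add: power2_eq_square)
    then show "2 * t * Re (cinner w (A *v v)) \<le> t^2 * (?lam * Re (cinner w w) - Re (cinner w (A *v w)))"
      by (simp add: algebra_simps)
  qed
  have "Re (cinner (\<i> *s w) (A *v v)) = 0"
    using re0 S w by (simp add: csubspace_def cinner_scale_right)
  then show ?thesis
    using re0[OF w] by (simp add: cinner_scale_left complex_eq_iff)
qed

lemma hermitian_eigenvector_exists:
  fixes A :: "complex^'n^'n"
  assumes herm: "adj A = A" and S: "csubspace S" and inv: "\<And>v. v \<in> S \<Longrightarrow> A *v v \<in> S"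
    and u: "u \<in> S" "u \<noteq> 0"
  obtains v c where "v \<in> S" "cinner v v = 1" "A *v v = c *s v"
proof -
  obtain v where v: "v \<in> S" "cinner v v = 1" and max:
    "\<And>w. w \<in> S \<Longrightarrow> Re (cinner w (A *v w)) \<le> Re (cinner v (A *v v)) * Re (cinner w w)"
    using rayleigh_quotient_attains_max[of S u A] S u by (auto simp: csubspace_def)
  define r where "r = A *v v - cinner v (A *v v) *s v"
  have "r \<in> S"
    using S v inv by (simp add: r_def csubspace_def subspace_diff)
  moreover have "cinner v r = 0"
    by (simp add: r_def cinner_diff_right cinner_scale_right v)
  ultimately have "cinner r (A *v v) = 0"
    using rayleigh_max_orthogonal[OF herm S v max] by blast
  moreover have "cinner r v = 0"
    using \<open>cinner v r = 0\<close> by (metis cnj_cinner complex_cnj_zero)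
  moreover have "cinner r r = cinner r (A *v v) - cinner v (A *v v) * cinner r v"
    by (simp add: r_def cinner_diff_right cinner_scale_right)
  ultimately have "r = 0"
    by simp
  then show thesis
    using that v by (simp add: r_def)
qed

lemma eigenbasis_insert:
  assumes B: "eigenbasis A {w \<in> S. cinner v w = 0} B" and S: "csubspace S"
    and v: "v \<in> S" "cinner v v = 1" "A *v v = c *s v"
  shows "eigenbasis A S (insert v B)"
proof -
  have fin: "finite B" and sub: "B \<subseteq> {w \<in> S. cinner v w = 0}"
    and norm: "\<forall>b\<in>B. cinner b b = 1" and orth: "\<forall>b\<in>B. \<forall>b'\<in>B. b \<noteq> b' \<longrightarrow> cinner b b' = 0"
    and eig: "\<forall>b\<in>B. \<exists>c. A *v b = c *s b"
    and expand: "\<forall>w\<in>{w \<in> S. cinner v w = 0}. w = (\<Sum>b\<in>B. cinner b w *s b)"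
    using B unfolding eigenbasis_def by blast+
  have orth_v: "cinner v b = 0" "cinner b v = 0" if "b \<in> B" for b
  proof -
    show "cinner v b = 0"
      using sub that by blast
    then show "cinner b v = 0"
      by (metis cnj_cinner complex_cnj_zero)
  qed
  have "v \<notin> B"
    using orth_v v by fastforce
  have "w = (\<Sum>b\<in>insert v B. cinner b w *s b)" if "w \<in> S" for w
  proof -
    define w' where "w' = w - cinner v w *s v"
    have "w' \<in> {w \<in> S. cinner v w = 0}"
      using S that v by (simp add: csubspace_def w'_def subspace_diff cinner_diff_right cinner_scale_right)
    then have "w' = (\<Sum>b\<in>B. cinner b w' *s b)"
      using expand by blast
    also have "\<dots> = (\<Sum>b\<in>B. cinner b w *s b)"
      by (rule sum.cong) (simp_all add: w'_def cinner_diff_right cinner_scale_right orth_v)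
    finally show ?thesis
      using fin \<open>v \<notin> B\<close> by (simp add: w'_def algebra_simps)
  qed
  moreover have "finite (insert v B)" "insert v B \<subseteq> S" "\<forall>b\<in>insert v B. cinner b b = 1"
    "\<forall>b\<in>insert v B. \<forall>b'\<in>insert v B. b \<noteq> b' \<longrightarrow> cinner b b' = 0"
    "\<forall>b\<in>insert v B. \<exists>c. A *v b = c *s b"
    using fin sub norm orth eig orth_v v by auto
  ultimately show ?thesis
    unfolding eigenbasis_def by blast
qed

lemma csubspace_orthogonal: "csubspace S \<Longrightarrow> csubspace {w \<in> S. cinner v w = 0}"
  unfolding csubspace_def subspace_def
  by (auto simp: cinner_add_right cinner_scale_right scaleR_eq_of_real_scale)

lemma dim_orthogonal_less:
  assumes S: "csubspace S" and v: "v \<in> S" "cinner v v = 1"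
  shows "dim {w \<in> S. cinner v w = 0} < dim S"
proof (rule dim_psubset)
  have "{w \<in> S. cinner v w = 0} \<subset> S"
    using v by force
  then show "span {w \<in> S. cinner v w = 0} \<subset> span S"
    using S csubspace_orthogonal[OF S] by (metis csubspace_def span_eq_iff)
qed

lemma hermitian_eigenbasis_of_invariant_subspace:
  fixes A :: "complex^'n^'n"
  assumes herm: "adj A = A"
  shows "csubspace S \<Longrightarrow> (\<And>v. v \<in> S \<Longrightarrow> A *v v \<in> S) \<Longrightarrow> \<exists>B. eigenbasis A S B"
proof (induct "dim S" arbitrary: S rule: less_induct)
  case less
  show ?case
  proof (cases "S \<subseteq> {0}")
    case True
    then have "eigenbasis A S {}"
      by (auto simp: eigenbasis_def)
    then show ?thesis by blast
  next
    case False
    then obtain u where "u \<in> S" "u \<noteq> 0" by blast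
    then obtain v c where v: "v \<in> S" "cinner v v = 1" "A *v v = c *s v"
      using hermitian_eigenvector_exists[OF herm less.prems] by blast
    define S' where "S' = {w \<in> S. cinner v w = 0}"
    have "A *v w \<in> S'" if "w \<in> S'" for w
    proof -
      have "cinner v (A *v w) = cinner (A *v v) w"
        using herm by (rule hermitian_cinner_swap)
      then show ?thesis
        using that less.prems(2) v by (simp add: S'_def cinner_scale_left)
    qed
    then obtain B where "eigenbasis A S' B"
      using less.hyps[of S'] less.prems(1) v csubspace_orthogonal dim_orthogonal_less
      unfolding S'_def by blast
    then show ?thesis
      using eigenbasis_insert less.prems(1) v unfolding S'_def by blast
  qed
qed

corollary hermitian_eigenbasis: "adj A = A \<Longrightarrow> \<exists>B. eigenbasis A UNIV B"
  by (rule hermitian_eigenbasis_of_invariant_subspace) (auto simp: csubspace_def subspace_UNIV)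

lemma eigenbasis_expand: "eigenbasis A S B \<Longrightarrow> v \<in> S \<Longrightarrow> v = (\<Sum>b\<in>B. cinner b v *s b)"
  unfolding eigenbasis_def by blast

lemma eigenbasis_eigenvalue:
  assumes "eigenbasis A S B" "b \<in> B"
  shows "A *v b = cinner b (A *v b) *s b"
proof -
  obtain c where "A *v b = c *s b" "cinner b b = 1"
    using assms unfolding eigenbasis_def by blast
  then show ?thesis
    by (simp add: cinner_scale_right)
qed

lemma eigenbasis_sum_delta:
  assumes "eigenbasis A S B" "b \<in> B"
  shows "(\<Sum>b'\<in>B. cinner b' b *s g b') = g b"
proof -
  have "finite B" "cinner b b = 1" "\<And>b'. b' \<in> B \<Longrightarrow> b' \<noteq> b \<Longrightarrow> cinner b' b = 0"
    using assms unfolding eigenbasis_def by blast+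
  then show ?thesis
    using assms(2) by (simp add: sum.remove sum.neutral)
qed

section \<open>Positive square roots and partial isometries\<close>

definition basis_diag :: "(complex^'n) set \<Rightarrow> (complex^'n \<Rightarrow> complex) \<Rightarrow> complex^'n^'n" where
  "basis_diag B f = (\<Sum>b\<in>B. outer (f b *s b) b)"

lemma basis_diag_mult_vec: "basis_diag B f *v v = (\<Sum>b\<in>B. cinner b v *s (f b *s b))"
  by (simp add: basis_diag_def sum_mult_vec outer_mult_vec)

lemma basis_diag_eigenvector: "eigenbasis A S B \<Longrightarrow> b \<in> B \<Longrightarrow> basis_diag B f *v b = f b *s b"
  using eigenbasis_sum_delta[of A S B b "\<lambda>b. f b *s b"] by (simp add: basis_diag_mult_vec)

lemma cnj_mult_self_nonneg: "0 \<le> cnj z * z"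
proof -
  have "cnj z * z = of_real ((cmod z)^2)"
    by (metis complex_norm_square mult.commute)
  then show ?thesis
    unfolding complex_nonneg_iff by simp
qed

lemma psd_basis_diag:
  assumes "\<And>b. 0 \<le> f b"
  shows "psd (basis_diag B f)"
  unfolding psd_iff_cinner
proof
  fix v
  have "cinner v (basis_diag B f *v v) = (\<Sum>b\<in>B. f b * (cnj (cinner v b) * cinner v b))"
    by (simp add: basis_diag_mult_vec cinner_sum_right cinner_scale_right cnj_cinner mult_ac)
  also have "0 \<le> \<dots>"
    by (intro sum_nonneg mult_nonneg_nonneg assms cnj_mult_self_nonneg)
  finally show "0 \<le> cinner v (basis_diag B f *v v)" .
qed

lemma basis_diag_mult:
  assumes B: "eigenbasis A UNIV B"
  shows "basis_diag B f ** basis_diag B g = basis_diag B (\<lambda>b. f b * g b)"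
  unfolding matrix_eq
proof
  fix v
  have "(basis_diag B f ** basis_diag B g) *v v
      = (\<Sum>b\<in>B. cinner b v *s (g b *s (basis_diag B f *v b)))"
    by (simp add: basis_diag_mult_vec[of B g] mult_vec_sum mult_vec_scale flip: matrix_vector_mul_assoc)
  also have "\<dots> = (\<Sum>b\<in>B. cinner b v *s ((f b * g b) *s b))"
    by (rule sum.cong) (simp_all add: basis_diag_eigenvector[OF B] vector_smult_assoc mult_ac)
  finally show "(basis_diag B f ** basis_diag B g) *v v = basis_diag B (\<lambda>b. f b * g b) *v v"
    by (simp add: basis_diag_mult_vec)
qed

lemma basis_diag_eigenvalues:
  assumes B: "eigenbasis A UNIV B"
  shows "basis_diag B (\<lambda>b. cinner b (A *v b)) = A"
  unfolding matrix_eq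
proof
  fix v
  have "A *v v = A *v (\<Sum>b\<in>B. cinner b v *s b)"
    using eigenbasis_expand[OF B UNIV_I] by metis
  also have "\<dots> = (\<Sum>b\<in>B. cinner b v *s (cinner b (A *v b) *s b))"
    by (simp add: mult_vec_sum mult_vec_scale eigenbasis_eigenvalue[OF B, symmetric] cong: sum.cong)
  finally show "basis_diag B (\<lambda>b. cinner b (A *v b)) *v v = A *v v"
    by (simp add: basis_diag_mult_vec)
qed

lemma psd_square_root_exists:
  assumes A: "psd A"
  shows "\<exists>S. psd S \<and> S ** S = A"
proof -
  obtain B where B: "eigenbasis A UNIV B"
    using hermitian_eigenbasis psd_adj_eq[OF A] by blast
  define s where "s b = complex_of_real (sqrt (Re (cinner b (A *v b))))" for b
  have eigenvalue: "0 \<le> Re (cinner b (A *v b))" "Im (cinner b (A *v b)) = 0" for b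
    using A by (auto simp: psd_iff_cinner complex_nonneg_iff)
  then have "s b * s b = cinner b (A *v b)" for b
    by (simp add: s_def complex_eq_iff flip: of_real_mult)
  then have "basis_diag B s ** basis_diag B s = A"
    by (simp add: basis_diag_mult[OF B] basis_diag_eigenvalues[OF B])
  moreover have "psd (basis_diag B s)"
    by (rule psd_basis_diag) (simp add: s_def complex_nonneg_iff eigenvalue)
  ultimately show ?thesis by blast
qed

lemma psd_sqrt_unique_existence: "psd A \<Longrightarrow> \<exists>!S. psd S \<and> S ** S = A"
  using psd_square_root_exists psd_square_root_unique by metis

lemma psd_psd_sqrt: "psd A \<Longrightarrow> psd (psd_sqrt A)"
  unfolding psd_sqrt_def using theI'[OF psd_sqrt_unique_existence] by blast

lemma psd_sqrt_mult_self: "psd A \<Longrightarrow> psd_sqrt A ** psd_sqrt A = A"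
  unfolding psd_sqrt_def using theI'[OF psd_sqrt_unique_existence] by blast

lemma cinner_gram: "cinner (M *v u) (M *v w) = cinner u ((adj M ** M) *v w)"
  by (simp add: cinner_adj_right flip: matrix_vector_mul_assoc)

lemma cinner_eq_if_gram_eq:
  "adj N ** N = adj M ** M \<Longrightarrow> cinner (N *v u) (N *v w) = cinner (M *v u) (M *v w)"
  by (simp add: cinner_gram)

text \<open>For an orthonormal eigenbasis \<open>B\<close> of the common Gram matrix, the vectors \<open>M b\<close> are
  pairwise orthogonal; the intertwiner sends each nonzero \<open>M b\<close> to \<open>N b\<close> and kills the
  orthogonal complement of the range of \<open>M\<close>.\<close>

definition intertwiner :: "(complex^'n) set \<Rightarrow> complex^'n^'a \<Rightarrow> complex^'n^'b \<Rightarrow> complex^'a^'b" where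
  "intertwiner B M N =
     (\<Sum>b\<in>{b\<in>B. M *v b \<noteq> 0}. outer ((1 / cinner (M *v b) (M *v b)) *s (N *v b)) (M *v b))"

lemma intertwiner_mult_vec:
  "intertwiner B M N *v z
     = (\<Sum>b\<in>{b\<in>B. M *v b \<noteq> 0}. (cinner (M *v b) z / cinner (M *v b) (M *v b)) *s (N *v b))"
  by (simp add: intertwiner_def sum_mult_vec outer_mult_vec vector_smult_assoc)

lemma intertwiner_mult:
  assumes B: "eigenbasis (adj M ** M) UNIV B" and G: "adj N ** N = adj M ** M"
  shows "intertwiner B M N ** M = N"
  unfolding matrix_eq
proof
  fix w
  let ?B' = "{b\<in>B. M *v b \<noteq> 0}"
  have "(intertwiner B M N ** M) *v w
      = (\<Sum>b\<in>?B'. (cinner (M *v b) (M *v w) / cinner (M *v b) (M *v b)) *s (N *v b))"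
    by (simp add: intertwiner_mult_vec flip: matrix_vector_mul_assoc)
  also have "\<dots> = (\<Sum>b\<in>?B'. cinner b w *s (N *v b))"
  proof (rule sum.cong[OF refl])
    fix b assume b: "b \<in> ?B'"
    have "cinner (M *v b) (M *v w) = cinner ((adj M ** M) *v b) w"
      by (simp add: cinner_gram hermitian_cinner_swap adj_mult)
    also have "(adj M ** M) *v b = cinner (M *v b) (M *v b) *s b"
      using eigenbasis_eigenvalue[OF B] b by (simp add: cinner_gram)
    finally show "(cinner (M *v b) (M *v w) / cinner (M *v b) (M *v b)) *s (N *v b) = cinner b w *s (N *v b)"
      using b by (simp add: cinner_scale_left cnj_cinner)
  qed
  also have "\<dots> = (\<Sum>b\<in>B. cinner b w *s (N *v b))"
  proof (rule sum.mono_neutral_left)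
    show "finite B"
      using B by (simp add: eigenbasis_def)
    show "\<forall>b\<in>B - ?B'. cinner b w *s (N *v b) = 0"
      using cinner_eq_if_gram_eq[OF G] by (metis (mono_tags) DiffE cinner_self_eq_0_iff mem_Collect_eq
          vector_smult_rzero)
  qed auto
  also have "\<dots> = N *v (\<Sum>b\<in>B. cinner b w *s b)"
    by (simp add: mult_vec_sum mult_vec_scale)
  finally show "(intertwiner B M N ** M) *v w = N *v w"
    using eigenbasis_expand[OF B UNIV_I] by metis
qed

lemma adj_intertwiner:
  assumes G: "adj N ** N = adj M ** M"
  shows "adj (intertwiner B M N) = intertwiner B N M"
proof -
  have "{b\<in>B. M *v b \<noteq> 0} = {b\<in>B. N *v b \<noteq> 0}"
    using cinner_eq_if_gram_eq[OF G] cinner_self_eq_0_iff by metis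
  moreover have "adj (outer ((1 / cinner (M *v b) (M *v b)) *s (N *v b)) (M *v b))
      = outer ((1 / cinner (N *v b) (N *v b)) *s (M *v b)) (N *v b)" for b
    by (simp add: adj_def outer_def vec_eq_iff cinner_eq_if_gram_eq[OF G] cnj_cinner)
  ultimately show ?thesis
    by (simp add: intertwiner_def adj_sum)
qed

lemma intertwiner_range: "\<exists>y. intertwiner B M N *v z = N *v y"
  by (rule exI[of _ "\<Sum>b\<in>{b\<in>B. M *v b \<noteq> 0}. (cinner (M *v b) z / cinner (M *v b) (M *v b)) *s b"])
    (simp add: intertwiner_mult_vec mult_vec_sum mult_vec_scale)

lemma partial_isometry_of_gram_eq:
  fixes M :: "complex^'n^'a" and N :: "complex^'n^'b"
  assumes G: "adj N ** N = adj M ** M"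
  obtains U :: "complex^'a^'b"
  where "U ** M = N" "adj U ** N = M" "adj U ** U ** (adj U ** U) = adj U ** U"
proof -
  obtain B where B: "eigenbasis (adj M ** M) UNIV B"
    using hermitian_eigenbasis by (metis adj_adj adj_mult)
  define U where "U = intertwiner B M N"
  have UM: "U ** M = N"
    unfolding U_def using B G by (rule intertwiner_mult)
  have adjU: "adj U = intertwiner B N M"
    unfolding U_def using G by (rule adj_intertwiner)
  have UN: "adj U ** N = M"
    unfolding adjU using B G by (simp add: intertwiner_mult)
  have "(adj U ** U ** (adj U ** U)) *v z = (adj U ** U) *v z" for z
  proof -
    obtain y where y: "(adj U ** U) *v z = M *v y"
      using intertwiner_range[of B N M] by (metis adjU matrix_vector_mul_assoc)
    then have "(adj U ** U ** (adj U ** U)) *v z = (adj U ** U) *v (M *v y)"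
      by (metis matrix_vector_mul_assoc)
    also have "\<dots> = M *v y"
      by (simp add: UM UN matrix_vector_mul_assoc flip: matrix_mul_assoc)
    finally show ?thesis
      using y by simp
  qed
  then show thesis
    using that UM UN matrix_eq by blast
qed

section \<open>Tensor products and partial traces\<close>

lemma mult_if_zero:
  "x * (if P then y else 0) = (if P then x * y else (0::'a::mult_zero))"
  "(if P then y else 0) * x = (if P then y * x else (0::'a::mult_zero))"
  by simp_all

lemma sum_UNIV_prod:
  "(\<Sum>p\<in>(UNIV::('a::finite \<times> 'b::finite) set). f p) = (\<Sum>a\<in>UNIV. \<Sum>b\<in>UNIV. f (a, b))"
  by (metis UNIV_Times_UNIV sum.cartesian_product')

lemma sum_UNIV_prod_swap:
  "(\<Sum>p\<in>(UNIV::('a::finite \<times> 'b::finite) set). f p) = (\<Sum>b\<in>UNIV. \<Sum>a\<in>UNIV. f (a, b))"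
  by (simp add: sum_UNIV_prod sum.swap[of _ "UNIV::'a set"])

lemma adj_kron: "adj (kron A B) = kron (adj A) (adj B)"
  by (simp add: adj_def kron_def vec_eq_iff)

lemma kron_mult_kron:
  fixes A :: "complex^'b::finite^'a::finite" and B :: "complex^'d::finite^'c::finite"
    and C :: "complex^'e::finite^'b" and D :: "complex^'f::finite^'d"
  shows "kron A B ** kron C D = kron (A ** C) (B ** D)"
  by (simp add: kron_def vec_eq_iff matrix_matrix_mult_def sum_UNIV_prod sum_product mult_ac)

lemma kron_mat_1_mult_entry:
  "(kron Z (mat 1 :: complex^'k^'k) ** X) $ (a, k) $ q = (\<Sum>a'\<in>UNIV. Z$a$a' * X$(a', k)$q)"
  by (simp add: matrix_matrix_mult_def kron_def sum_UNIV_prod mat_def mult_if_zero)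

lemma mult_kron_mat_1_entry:
  "(X ** kron Z (mat 1 :: complex^'k^'k)) $ p $ (a, k) = (\<Sum>a'\<in>UNIV. X$p$(a', k) * Z$a'$a)"
  by (simp add: matrix_matrix_mult_def kron_def sum_UNIV_prod mat_def mult_if_zero)

lemma mult_mat_1_kron_entry:
  "(R ** kron (mat 1 :: complex^'k^'k) \<rho>) $ a $ (k, h') = (\<Sum>h\<in>UNIV. R$a$(k, h) * \<rho>$h$h')"
  by (simp add: matrix_matrix_mult_def kron_def sum_UNIV_prod_swap mat_def mult_if_zero)

lemma ptrace1_kron_mult_commute:
  "ptrace1 (kron Z (mat 1 :: complex^'k^'k) ** X) = ptrace1 (X ** kron Z (mat 1))"
proof -
  have "(\<Sum>a\<in>UNIV. \<Sum>a'\<in>UNIV. Z$a$a' * X$(a', k)$(a, l))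
      = (\<Sum>a\<in>UNIV. \<Sum>a'\<in>UNIV. X$(a, k)$(a', l) * Z$a'$a)" for k l :: 'k
    by (subst sum.swap) (simp add: mult.commute)
  then show ?thesis
    by (simp add: ptrace1_def vec_eq_iff kron_mat_1_mult_entry mult_kron_mat_1_entry)
qed

text \<open>\<open>reshuffle V\<close> reads \<open>V : H \<rightarrow> A \<otimes> K\<close> as an operator \<open>K \<otimes> H \<rightarrow> A\<close>; this turns the
  partial trace over \<open>K\<close> into a sandwich.\<close>

definition reshuffle :: "complex^'h::finite^('a::finite \<times> 'k::finite) \<Rightarrow> complex^('k \<times> 'h)^'a" where
  "reshuffle V = (\<chi> a p. V $ (a, fst p) $ snd p)"

lemma ptrace2_sandwich:
  fixes V :: "complex^'h::finite^('a::finite \<times> 'k::finite)"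
  shows "ptrace2 (V ** \<rho> ** adj V) = reshuffle V ** kron (mat 1 :: complex^'k^'k) \<rho> ** adj (reshuffle V)"
proof -
  have "ptrace2 (V ** \<rho> ** adj V) $ a $ b
      = (\<Sum>k\<in>UNIV. \<Sum>h'\<in>UNIV. (\<Sum>h\<in>UNIV. V$(a, k)$h * \<rho>$h$h') * cnj (V$(b, k)$h'))" for a b
    by (simp add: ptrace2_def matrix_matrix_mult_def adj_def)
  also have "\<dots> a b = (\<Sum>k\<in>UNIV. \<Sum>h'\<in>UNIV.
      (reshuffle V ** kron (mat 1 :: complex^'k^'k) \<rho>) $ a $ (k, h') * adj (reshuffle V) $ (k, h') $ b)"
    for a b
    by (simp only: mult_mat_1_kron_entry) (simp add: adj_def reshuffle_def)
  also have "\<dots> a b = (reshuffle V ** kron (mat 1 :: complex^'k^'k) \<rho> ** adj (reshuffle V)) $ a $ b"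
    for a b
    by (simp only: matrix_matrix_mult_def[of "reshuffle V ** kron (mat 1) \<rho>"] vec_lambda_beta
        sum_UNIV_prod)
  finally show ?thesis
    by (simp add: vec_eq_iff)
qed

lemma mult_outer: "A ** outer x y = outer (A *v x) y"
  by (simp add: vec_eq_iff outer_def matrix_matrix_mult_def matrix_vector_mult_def
      sum_distrib_right sum_distrib_left mult_ac)

lemma outer_mult_adj: "outer x y ** adj B = outer x (B *v y)"
  by (simp add: vec_eq_iff outer_def matrix_matrix_mult_def matrix_vector_mult_def adj_def
      sum_distrib_left mult_ac)

definition gram_block :: "complex^'h::finite^('a::finite \<times> 'k::finite) \<Rightarrow> 'k \<Rightarrow> 'k \<Rightarrow> complex^'h^'h" where
  "gram_block V k l = (\<chi> h' h. \<Sum>a\<in>UNIV. cnj (V$(a, l)$h') * V$(a, k)$h)"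

lemma gram_reshuffle_entry:
  "(adj (reshuffle V) ** reshuffle V) $ (l, h') $ (k, h) = gram_block V k l $ h' $ h"
  by (simp add: adj_def reshuffle_def gram_block_def matrix_matrix_mult_def)

lemma ptrace1_sandwich_outer_entry:
  fixes V :: "complex^'h::finite^('a::finite \<times> 'k::finite)"
  shows "ptrace1 (V ** outer u u ** adj V) $ k $ l = cinner u (gram_block V k l *v u)"
proof -
  have "ptrace1 (V ** outer u u ** adj V) $ k $ l = (\<Sum>a\<in>UNIV. (V *v u)$(a, k) * cnj ((V *v u)$(a, l)))"
    unfolding mult_outer outer_mult_adj by (simp add: ptrace1_def outer_def)
  also have "\<dots> = (\<Sum>a\<in>UNIV. \<Sum>h'\<in>UNIV. \<Sum>h\<in>UNIV. V$(a, k)$h * u$h * (cnj (V$(a, l)$h') * cnj (u$h')))"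
    by (simp add: matrix_vector_mult_def sum_distrib_left sum_distrib_right)
  also have "\<dots> = (\<Sum>h'\<in>UNIV. \<Sum>h\<in>UNIV. \<Sum>a\<in>UNIV. V$(a, k)$h * u$h * (cnj (V$(a, l)$h') * cnj (u$h')))"
    by (subst sum.swap, rule sum.cong, rule refl, subst sum.swap, rule refl)
  also have "\<dots> = cinner u (gram_block V k l *v u)"
    by (simp add: cinner_def gram_block_def matrix_vector_mult_def sum_distrib_left sum_distrib_right mult_ac)
  finally show ?thesis .
qed

section \<open>Complementary instruments of a dilation\<close>

definition dilation_branch ::
  "complex^'h^('a::finite \<times> 'k::finite) \<Rightarrow> ('x \<Rightarrow> complex^'a^'a) \<Rightarrow> 'x \<Rightarrow> complex^'h^('a \<times> 'k)" where
  "dilation_branch W E x = kron (psd_sqrt (E x)) (mat 1 :: complex^'k^'k) ** W"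

lemma dilation_psd: "dilation I W E \<Longrightarrow> psd (E x)"
  by (simp add: dilation_def povm_def)

lemma adj_kron_psd_sqrt:
  "psd E \<Longrightarrow> adj (kron (psd_sqrt E) (mat 1 :: complex^'k::finite^'k)) = kron (psd_sqrt E) (mat 1)"
  by (simp add: adj_kron psd_adj_eq psd_psd_sqrt)

lemma kron_psd_sqrt_mult_self:
  "psd E \<Longrightarrow> kron (psd_sqrt E) (mat 1 :: complex^'k::finite^'k) ** kron (psd_sqrt E) (mat 1) = kron E (mat 1)"
  by (simp add: kron_mult_kron psd_sqrt_mult_self)

lemma ptrace1_dilation_branch:
  fixes W :: "complex^'h::finite^('a::finite \<times> 'k::finite)"
  assumes E: "psd (E x)"
  shows "ptrace1 (W ** \<rho> ** adj W ** kron (E x) (mat 1))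
    = ptrace1 (dilation_branch W E x ** \<rho> ** adj (dilation_branch W E x))"
proof -
  let ?K = "kron (psd_sqrt (E x)) (mat 1 :: complex^'k^'k)"
  have "ptrace1 (W ** \<rho> ** adj W ** kron (E x) (mat 1)) = ptrace1 ((W ** \<rho> ** adj W ** ?K) ** ?K)"
    by (simp add: kron_psd_sqrt_mult_self[OF E, symmetric] matrix_mul_assoc)
  also have "\<dots> = ptrace1 (?K ** (W ** \<rho> ** adj W ** ?K))"
    by (rule ptrace1_kron_mult_commute[symmetric])
  also have "\<dots> = ptrace1 (dilation_branch W E x ** \<rho> ** adj (dilation_branch W E x))"
    by (simp add: dilation_branch_def adj_mult adj_kron_psd_sqrt[OF E] matrix_mul_assoc)
  finally show ?thesis .
qed

lemma complementary_eq_sandwich: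
  fixes W :: "complex^'h::finite^('a::finite \<times> 'k::finite)"
  assumes E: "psd (E x)"
  shows "complementary W E x \<rho> = reshuffle (dilation_branch W E x) ** kron (mat 1 :: complex^'k^'k) \<rho>
    ** adj (reshuffle (dilation_branch W E x))"
proof -
  have "complementary W E x \<rho> = ptrace2 (dilation_branch W E x ** \<rho> ** adj (dilation_branch W E x))"
    by (simp add: complementary_def dilation_branch_def adj_mult adj_kron_psd_sqrt[OF E] matrix_mul_assoc)
  then show ?thesis
    by (simp add: ptrace2_sandwich)
qed

lemma density_outer: "cinner u u = 1 \<Longrightarrow> density (outer u u)"
  unfolding density_def psd_iff_cinner
proof
  have "cinner v (outer u u *v v) = cnj (cinner v u) * cinner v u" for v
    by (simp add: outer_mult_vec cinner_scale_right cnj_cinner)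
  then show "\<forall>v. 0 \<le> cinner v (outer u u *v v)"
    by (simp add: cnj_mult_self_nonneg)
  show "cinner u u = 1 \<Longrightarrow> trace (outer u u) = 1"
    by (simp add: trace_def outer_def cinner_def mult.commute)
qed

lemma gram_block_dilation_branch:
  assumes d: "dilation I W E" and u: "cinner u u = 1"
  shows "cinner u (gram_block (dilation_branch W E x) k l *v u) = I x (outer u u) $ k $ l"
  using d density_outer[OF u]
  by (simp add: dilation_def ptrace1_dilation_branch[where E = E and x = x, OF dilation_psd[OF d]] ptrace1_sandwich_outer_entry)

lemma matrix_eq_0_if_unit_forms_0:
  fixes C :: "complex^'n^'n"
  assumes unit: "\<And>u. cinner u u = 1 \<Longrightarrow> cinner u (C *v u) = 0"
  shows "C = 0"
proof -
  have form: "cinner u (C *v u) = 0" for u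
  proof (cases "u = 0")
    case False
    define c where "c = 1 / norm u"
    have "c * c * (norm u)^2 = 1"
      using False by (simp add: c_def power2_eq_square)
    moreover have "cinner (of_real c *s u) (of_real c *s u) = of_real c * of_real c * cinner u u"
      by (simp add: cinner_scale_left cinner_scale_right)
    moreover have "of_real c * of_real c * cinner u u = complex_of_real (c * c * (norm u)^2)"
      by (simp add: cinner_self_eq_norm)
    ultimately have "cinner (of_real c *s u) (of_real c *s u) = 1"
      by (simp only: of_real_1)
    then have "cinner (of_real c *s u) (C *v (of_real c *s u)) = 0"
      by (rule unit)
    then have "of_real c * of_real c * cinner u (C *v u) = 0"
      by (simp add: cinner_scale_left cinner_scale_right mult_vec_scale)
    then show ?thesis
      using False by (simp add: c_def)
  qed simp
  then have "psd C"
    by (simp add: psd_iff_cinner)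
  then show ?thesis
    unfolding matrix_eq by (simp add: form psd_form_zero_imp_zero)
qed

lemma gram_reshuffle_dilation_branch_eq:
  assumes d1: "dilation I W1 E1" and d2: "dilation I W2 E2"
  shows "adj (reshuffle (dilation_branch W1 E1 x)) ** reshuffle (dilation_branch W1 E1 x)
    = adj (reshuffle (dilation_branch W2 E2 x)) ** reshuffle (dilation_branch W2 E2 x)"
proof -
  have "gram_block (dilation_branch W1 E1 x) k l - gram_block (dilation_branch W2 E2 x) k l = 0" for k l
    by (rule matrix_eq_0_if_unit_forms_0)
      (simp add: matrix_vector_mult_diff_rdistrib cinner_diff_right gram_block_dilation_branch[OF d1]
        gram_block_dilation_branch[OF d2])
  then show ?thesis
    by (simp add: vec_eq_iff gram_reshuffle_entry split_paired_all)
qed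

section \<open>Postprocessing by channels\<close>

lemma cscale_add_left: "cscale (a + b) X = cscale a X + cscale b X"
  by (simp add: cscale_def vec_eq_iff algebra_simps)

lemma cscale_add_right: "cscale c (X + Y) = cscale c X + cscale c Y"
  by (simp add: cscale_def vec_eq_iff algebra_simps)

lemma cscale_zero_left [simp]: "cscale 0 A = 0"
  by (simp add: cscale_def vec_eq_iff)

lemma cscale_zero_right [simp]: "cscale c 0 = 0"
  by (simp add: cscale_def vec_eq_iff)

lemma cscale_cscale: "cscale a (cscale b X) = cscale (a * b) X"
  by (simp add: cscale_def vec_eq_iff)

lemma cscale_mult_left: "cscale c A ** (B::complex^'n^'m) = cscale c (A ** B)"
  by (simp add: cscale_def vec_eq_iff matrix_matrix_mult_def sum_distrib_left mult_ac)

lemma cscale_mult_right: "(A::complex^'m^'p) ** cscale c B = cscale c (A ** B)"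
  by (simp add: cscale_def vec_eq_iff matrix_matrix_mult_def sum_distrib_left mult_ac)

lemma trace_cscale: "trace (cscale c A) = c * trace A"
  by (simp add: cscale_def trace_def sum_distrib_left)

lemma cscale_mult_vec: "cscale c A *v v = c *s (A *v v)"
  by (simp add: cscale_def vec_eq_iff matrix_vector_mult_def sum_distrib_left mult_ac)

definition basis_state :: "'a::finite \<Rightarrow> complex^'a^'a" where
  "basis_state e = (\<chi> i j. if i = e \<and> j = e then 1 else 0)"

lemma trace_basis_state: "trace (basis_state e) = 1"
  by (simp add: trace_def basis_state_def)

lemma cinner_basis_state: "cinner u (basis_state e *v w) = cnj (u $ e) * w $ e"
proof -
  have "basis_state e *v w = (\<chi> r. if r = e then w $ e else 0)"
    by (simp add: vec_eq_iff basis_state_def matrix_vector_mult_def mult_if_zero)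
  then show ?thesis
    by (simp add: cinner_def mult_if_zero)
qed

lemma trace_sandwich:
  "trace (Q ** (X::complex^'n^'n) ** adj Q)
    = (\<Sum>s\<in>UNIV. cinner (adj Q *v axis s 1) (X *v (adj Q *v axis s 1)))"
  unfolding trace_cinner
  by (simp add: cinner_adj_left flip: matrix_vector_mul_assoc)

lemma block_psd_iff_cinner: "block_psd k Y \<longleftrightarrow> (\<forall>v. 0 \<le> (\<Sum>i<k. \<Sum>j<k. cinner (v i) (Y i j *v v j)))"
  by (simp add: block_psd_def cinner_def)

lemma completely_positive_add:
  assumes "completely_positive \<Phi>" "completely_positive \<Psi>"
  shows "completely_positive (\<lambda>\<sigma>. \<Phi> \<sigma> + \<Psi> \<sigma>)"
  using assms
  by (auto simp: completely_positive_def block_psd_iff_cinner matrix_vector_mult_add_rdistrib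
      cinner_add_right sum.distrib intro: add_nonneg_nonneg)

lemma completely_positive_sandwich:
  fixes U :: "complex^'a::finite^'b::finite"
  shows "completely_positive (\<lambda>\<sigma>. U ** \<sigma> ** adj U)"
  unfolding completely_positive_def block_psd_iff_cinner
proof (intro allI impI)
  fix k and X :: "nat \<Rightarrow> nat \<Rightarrow> complex^'a^'a" and v :: "nat \<Rightarrow> complex^'b"
  assume "\<forall>v. 0 \<le> (\<Sum>i<k. \<Sum>j<k. cinner (v i) (X i j *v v j))"
  moreover have "cinner (v i) ((U ** X i j ** adj U) *v v j) = cinner (adj U *v v i) (X i j *v (adj U *v v j))"
    for i j :: nat
    by (simp add: cinner_adj_left flip: matrix_vector_mul_assoc)
  ultimately show "0 \<le> (\<Sum>i<k. \<Sum>j<k. cinner (v i) ((U ** X i j ** adj U) *v v j))"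
    by simp
qed

lemma completely_positive_trace_prepare:
  fixes Q :: "complex^'a::finite^'c::finite" and e :: "'b::finite"
  shows "completely_positive (\<lambda>\<sigma>. cscale (trace (Q ** \<sigma> ** adj Q)) (basis_state e))"
  unfolding completely_positive_def block_psd_iff_cinner
proof (intro allI impI)
  fix k and X :: "nat \<Rightarrow> nat \<Rightarrow> complex^'a^'a" and v :: "nat \<Rightarrow> complex^'b"
  assume X: "\<forall>v. 0 \<le> (\<Sum>i<k. \<Sum>j<k. cinner (v i) (X i j *v v j))"
  let ?w = "\<lambda>s i. (v i $ e) *s (adj Q *v axis s 1)"
  have "(\<Sum>i<k. \<Sum>j<k. cinner (v i) (cscale (trace (Q ** X i j ** adj Q)) (basis_state e) *v v j))
      = (\<Sum>i<k. \<Sum>j<k. \<Sum>s\<in>UNIV. cinner (?w s i) (X i j *v ?w s j))"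
    by (simp add: cscale_mult_vec cinner_scale_right cinner_basis_state trace_sandwich
        cinner_scale_left mult_vec_scale sum_distrib_left sum_distrib_right mult_ac)
  also have "\<dots> = (\<Sum>i<k. \<Sum>s\<in>UNIV. \<Sum>j<k. cinner (?w s i) (X i j *v ?w s j))"
    by (rule sum.cong[OF refl], rule sum.swap)
  also have "\<dots> = (\<Sum>s\<in>UNIV. \<Sum>i<k. \<Sum>j<k. cinner (?w s i) (X i j *v ?w s j))"
    by (rule sum.swap)
  also have "0 \<le> \<dots>"
    using X by (simp add: sum_nonneg)
  finally show "0 \<le> (\<Sum>i<k. \<Sum>j<k.
      cinner (v i) (cscale (trace (Q ** X i j ** adj Q)) (basis_state e) *v v j))" .
qed

definition channel :: "(complex^'n^'n \<Rightarrow> complex^'m^'m) \<Rightarrow> bool" where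
  "channel \<Phi> \<longleftrightarrow> clinear_map \<Phi> \<and> completely_positive \<Phi> \<and> (\<forall>\<sigma>. trace (\<Phi> \<sigma>) = trace \<sigma>)"

lemma instrument_single_outcome:
  assumes "channel \<Phi>"
  shows "instrument (\<lambda>x \<sigma>. if x = y then \<Phi> \<sigma> else 0)"
proof -
  have "clinear_map (\<lambda>\<sigma>. if x = y then \<Phi> \<sigma> else 0)
      \<and> completely_positive (\<lambda>\<sigma>. if x = y then \<Phi> \<sigma> else 0)
      \<and> (\<forall>\<rho>. psd \<rho> \<longrightarrow> trace (if x = y then \<Phi> \<rho> else 0) \<le> trace \<rho>)" for x
  proof (cases "x = y")
    case True
    then show ?thesis
      using assms by (simp add: channel_def)
  next
    case False
    then show ?thesis
      by (simp add: clinear_map_def completely_positive_def block_psd_def trace_psd_nonneg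
          trace_0[simplified])
  qed
  moreover have "trace (\<Sum>x\<in>UNIV. if x = y then \<Phi> \<rho> else 0) = trace \<rho>" for \<rho>
    using assms by (simp add: channel_def)
  ultimately show ?thesis
    unfolding instrument_def by blast
qed

lemma postproc_if_channels:
  fixes I :: "'x::finite \<Rightarrow> complex^'h^'h \<Rightarrow> complex^'k^'k" and J :: "'x \<Rightarrow> complex^'h^'h \<Rightarrow> complex^'v^'v"
  assumes "\<And>x. channel (\<Phi> x)" and "\<And>x \<rho>. I x \<rho> = \<Phi> x (J x \<rho>)"
  shows "postproc I J"
  unfolding postproc_def
proof (intro exI conjI allI)
  show "instrument (\<lambda>x \<sigma>. if x = y then \<Phi> y \<sigma> else 0)" for y
    using assms(1) by (rule instrument_single_outcome)
  show "I x = (\<lambda>\<rho>. \<Sum>y\<in>UNIV. if x = y then \<Phi> y (J y \<rho>) else 0)" for x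
    by (simp add: assms(2) fun_eq_iff)
qed

text \<open>The part of \<open>\<sigma>\<close> outside the initial space of \<open>U\<close> is discarded and replaced by the pure
  state \<open>|e\<rangle>\<langle>e|\<close> of the same weight, so that the map becomes trace preserving.\<close>

definition partial_isometry_channel :: "complex^'b::finite^'a::finite \<Rightarrow> 'a \<Rightarrow> complex^'b^'b \<Rightarrow> complex^'a^'a" where
  "partial_isometry_channel U e \<sigma> = U ** \<sigma> ** adj U
     + cscale (trace ((mat 1 - adj U ** U) ** \<sigma> ** adj (mat 1 - adj U ** U))) (basis_state e)"

lemma channel_partial_isometry_channel:
  assumes P: "adj U ** U ** (adj U ** U) = adj U ** U"
  shows "channel (partial_isometry_channel U e)"
proof -
  let ?Q = "mat 1 - adj U ** U"
  have "clinear_map (partial_isometry_channel U e)"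
    by (simp add: clinear_map_def partial_isometry_channel_def matrix_add_ldistrib matrix_add_rdistrib
        trace_add cscale_add_left cscale_add_right cscale_mult_left cscale_mult_right trace_cscale
        cscale_cscale algebra_simps)
  moreover have "completely_positive (partial_isometry_channel U e)"
    unfolding partial_isometry_channel_def
    by (intro completely_positive_add completely_positive_sandwich completely_positive_trace_prepare)
  moreover have "trace (partial_isometry_channel U e \<sigma>) = trace \<sigma>" for \<sigma>
  proof -
    have "adj ?Q = ?Q" "?Q ** ?Q = ?Q"
      by (simp_all add: adj_diff adj_mult matrix_diff_ldistrib matrix_diff_rdistrib P)
    then have "trace (?Q ** \<sigma> ** adj ?Q) = trace (?Q ** \<sigma>)"
      by (metis trace_mul_sym matrix_mul_assoc)
    moreover have "trace (U ** \<sigma> ** adj U) = trace (adj U ** U ** \<sigma>)"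
      by (metis trace_mul_sym matrix_mul_assoc)
    ultimately show ?thesis
      by (simp add: partial_isometry_channel_def trace_add trace_cscale trace_basis_state
          matrix_diff_rdistrib trace_sub)
  qed
  ultimately show ?thesis
    by (simp add: channel_def)
qed

lemma partial_isometry_channel_sandwich:
  assumes "(mat 1 - adj U ** U) ** M = 0"
  shows "partial_isometry_channel U e (M ** X ** adj M) = (U ** M) ** X ** adj (U ** M)"
  using assms by (simp add: partial_isometry_channel_def adj_mult matrix_mul_assoc trace_0[simplified])

lemma postproc_complementary:
  assumes d1: "dilation I W1 E1" and d2: "dilation I W2 E2"
  shows "postproc (complementary W1 E1) (complementary W2 E2)"
proof -
  let ?M1 = "\<lambda>x. reshuffle (dilation_branch W1 E1 x)"
    and ?M2 = "\<lambda>x. reshuffle (dilation_branch W2 E2 x)"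
  have "\<exists>U. U ** ?M2 x = ?M1 x \<and> adj U ** ?M1 x = ?M2 x \<and> adj U ** U ** (adj U ** U) = adj U ** U"
    for x
    by (rule partial_isometry_of_gram_eq[OF gram_reshuffle_dilation_branch_eq[OF d1 d2]]) blast
  then obtain U where U: "\<And>x. U x ** ?M2 x = ?M1 x" "\<And>x. adj (U x) ** ?M1 x = ?M2 x"
    "\<And>x. adj (U x) ** U x ** (adj (U x) ** U x) = adj (U x) ** U x"
    by metis
  have "(mat 1 - adj (U x) ** U x) ** ?M2 x = 0" for x
    by (simp add: matrix_diff_rdistrib U flip: matrix_mul_assoc)
  then have "complementary W1 E1 x \<rho> = partial_isometry_channel (U x) undefined (complementary W2 E2 x \<rho>)"
    for x \<rho>
    by (simp add: complementary_eq_sandwich dilation_psd[OF d1] dilation_psd[OF d2]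
        partial_isometry_channel_sandwich U)
  then show ?thesis
    by (intro postproc_if_channels[where \<Phi> = "\<lambda>x. partial_isometry_channel (U x) undefined"])
      (simp_all add: channel_partial_isometry_channel U)
qed

theorem proposition6:
  fixes I :: "'x::finite \<Rightarrow> complex^'h^'h \<Rightarrow> complex^'k^'k"
    and W1 :: "complex^'h::finite^('a::finite \<times> 'k::finite)" and E1 :: "'x \<Rightarrow> complex^'a^'a"
    and W2 :: "complex^'h^('b::finite \<times> 'k)" and E2 :: "'x \<Rightarrow> complex^'b^'b"
  assumes "instrument I"
    and "dilation I W1 E1"
    and "dilation I W2 E2"
  shows "postproc_equiv (complementary W1 E1) (complementary W2 E2)"
  using postproc_complementary[OF assms(2,3)] postproc_complementary[OF assms(3,2)]
  unfolding postproc_equiv_def by blast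

end
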